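(* Let $\lambda>0$, $\lambda_{max}>0$, $p\in(0,1)$, let $B\ge1$ be an integer, and let $f_B:[0,1]\to\mathbb{R}$ be as defined in the context. For $q,\tilde q\in[0,1]$ let $\mathrm{TH}_B(q,\tilde q)=f_B(q)\exp\!\big(-\frac{\lambda f_B(\tilde q)}{\lambda_{max}}\big)$, and call $q^*\in[0,1]$ a symmetric Nash equilibrium (SNE) if $\mathrm{TH}_B(q^*,q^* )=\max_{q\in[0,1]}\mathrm{TH}_B(q,q^* )$. Then $q^*=1$ is an SNE. At any SNE $q^*$, $\mathrm{TH}_B(q^*,q^* )=p\exp\!\big(-\frac{p\lambda}{\lambda_{max}}\big)$ and the transmission capacity $C=\lambda\,\mathrm{TH}_B(q^*,q^* )$ equals $\lambda p\exp\!\big(-\frac{p\lambda}{\lambda_{max}}\big)$.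
   Context: For $q\in(0,1]$ define $r_B(q)$ by: if $B=1$, $r_1(q)=\frac{p}{p+q-pq}$; if $B>1$ and $q\ne p$, $r_B(q)=\frac{\frac{p}{q}(1-\rho^B)}{1-\frac{p}{q}\rho^B}$ with $\rho=\frac{p(1-q)}{q(1-p)}$; if $B>1$ and $q=p$, $r_B(p)=\frac{B}{B+1-p}$. Set $f_B(q)=q\,r_B(q)$ for $q\in(0,1]$ and $f_B(0)=0$. Interpretation: transmitters form a homogeneous Poisson point process of density $\lambda$ in $\mathbb{R}^2$, harvest one energy unit per slot with probability $p$ into a battery of capacity $B$, and transmit with their own ALOHA probability when the battery is nonempty; $\mathrm{TH}_B(q,\tilde q)$ is the throughput of a transmitter using $q$ when all others use $\tilde q$; $\lambda_{max}=\frac{1}{d^2\theta^{2/\alpha}\kappa(\alpha)}$, $\kappa(\alpha)=\frac{2\pi^2}{\alpha\sin(2\pi/\alpha)}$. *)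

theory Defs
  imports Complex_Main
begin

definition rB :: "nat \<Rightarrow> real \<Rightarrow> real \<Rightarrow> real" where
  "rB B p q =
    (if B = 1 then p / (p + q - p * q)
     else if q = p then real B / (real B + 1 - p)
     else (let \<rho> = p * (1 - q) / (q * (1 - p))
           in ((p / q) * (1 - \<rho> ^ B)) / (1 - (p / q) * \<rho> ^ B)))"

definition fB :: "nat \<Rightarrow> real \<Rightarrow> real \<Rightarrow> real" where
  "fB B p q = (if q = 0 then 0 else q * rB B p q)"

definition TH :: "nat \<Rightarrow> real \<Rightarrow> real \<Rightarrow> real \<Rightarrow> real \<Rightarrow> real \<Rightarrow> real" where
  "TH B p lam lmax q qt = fB B p q * exp (- (lam * fB B p qt / lmax))"

definition SNE :: "nat \<Rightarrow> real \<Rightarrow> real \<Rightarrow> real \<Rightarrow> real \<Rightarrow> bool" where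
  "SNE B p lam lmax qs \<longleftrightarrow> qs \<in> {0..1} \<and>
     (\<forall>q\<in>{0..1}. TH B p lam lmax q qs \<le> TH B p lam lmax qs qs)"

end

theory Submission
  imports Defs
begin

text \<open>Against a fixed opponent profile the throughput is the effective transmission rate
  \<open>fB q\<close> times a positive constant, so best responses maximise \<open>fB\<close> on \<open>[0,1]\<close>. Since a
  transmitter can never send more often than it harvests energy, \<open>fB q \<le> p\<close>, and \<open>q = 1\<close>
  attains \<open>p\<close>. Hence the SNE are exactly the \<open>q\<close> with \<open>fB q = p\<close>, and the equilibrium
  throughput is \<open>p exp (-\<lambda> p / \<lambda>\<^sub>m\<^sub>a\<^sub>x)\<close>.\<close>

lemma one_minus_power_div_le_one:
  fixes s r :: real
  assumes "(s < 1 \<and> 0 \<le> r \<and> r < 1) \<or> (1 < s \<and> 1 < r)" and "B \<ge> 1"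
  shows "(1 - r ^ B) / (1 - s * r ^ B) \<le> 1"
proof (cases "s < 1")
  case True
  with assms have r: "0 \<le> r" "r < 1" by auto
  have "r ^ B < 1" using r assms(2) by (simp add: power_less_one_iff)
  moreover have "s * r ^ B \<le> r ^ B"
    using mult_right_mono[of s 1 "r ^ B"] True r by simp
  ultimately show ?thesis by (simp add: divide_le_eq)
next
  case False
  with assms have s: "1 < s" and r: "1 < r" by auto
  have "1 < r ^ B" using r assms(2) by (simp add: one_less_power)
  moreover have "1 < s * r ^ B"
    using s \<open>1 < r ^ B\<close> by (rule less_1_mult)
  ultimately show ?thesis using s by (simp add: divide_le_eq)
qed

lemma rho_bounds:
  fixes p q :: real
  assumes "0 < p" "p < 1" "0 < q" "q \<le> 1" "q \<noteq> p"
  defines "\<rho> \<equiv> p * (1 - q) / (q * (1 - p))"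
  shows "(p / q < 1 \<and> 0 \<le> \<rho> \<and> \<rho> < 1) \<or> (1 < p / q \<and> 1 < \<rho>)"
proof (cases "p < q")
  case True
  have "p * (1 - q) < q * (1 - p)" using True by (simp add: algebra_simps)
  then show ?thesis using True assms by (simp add: \<rho>_def)
next
  case False
  with assms have "q < p" by simp
  moreover have "q * (1 - p) < p * (1 - q)" using \<open>q < p\<close> by (simp add: algebra_simps)
  ultimately show ?thesis using assms by (simp add: \<rho>_def)
qed

lemma fB_le:
  fixes p q :: real
  assumes "0 < p" "p < 1" "0 \<le> q" "q \<le> 1" "B \<ge> 1"
  shows "fB B p q \<le> p"
proof (cases "q = 0")
  case True
  then show ?thesis using assms by (simp add: fB_def)
next
  case False
  with assms have q: "0 < q" by simp
  consider "B = 1" | "B \<noteq> 1" "q = p" | "B \<noteq> 1" "q \<noteq> p" by blast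
  then show ?thesis
  proof cases
    case 1
    have "p * q \<le> q" using assms by (simp add: mult_left_le_one_le)
    then have "q * p \<le> p * (p + q - p * q)"
      using assms by (simp add: algebra_simps mult_left_le_one_le)
    moreover have "0 < p + q - p * q" using \<open>p * q \<le> q\<close> assms by linarith
    ultimately show ?thesis using 1 q by (simp add: fB_def rB_def divide_le_eq)
  next
    case 2
    have "p * (real B / (real B + 1 - p)) \<le> p * 1"
      using assms by (intro mult_left_mono) auto
    then show ?thesis using 2 q by (simp add: fB_def rB_def)
  next
    case 3
    define \<rho> where "\<rho> = p * (1 - q) / (q * (1 - p))"
    have ratio: "(1 - \<rho> ^ B) / (1 - p / q * \<rho> ^ B) \<le> 1"
      using one_minus_power_div_le_one rho_bounds assms q 3(2) unfolding \<rho>_def by blast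
    have "fB B p q = p * ((1 - \<rho> ^ B) / (1 - p / q * \<rho> ^ B))"
      using 3 q by (simp add: fB_def rB_def Let_def \<rho>_def[symmetric])
    also have "\<dots> \<le> p" using mult_left_mono[OF ratio] assms by simp
    finally show ?thesis .
  qed
qed

lemma fB_one:
  assumes "B \<ge> 1"
  shows "fB B p 1 = p"
  using assms by (cases "B = 1") (auto simp: fB_def rB_def Let_def zero_power)

lemma SNE_iff_fB_eq:
  fixes p :: real
  assumes "0 < p" "p < 1" "B \<ge> 1"
  shows "SNE B p lam lmax qs \<longleftrightarrow> qs \<in> {0..1} \<and> fB B p qs = p"
proof -
  have TH_mono: "TH B p lam lmax q qs \<le> TH B p lam lmax q' qs \<longleftrightarrow> fB B p q \<le> fB B p q'"
    for q q' by (simp add: TH_def)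
  have "SNE B p lam lmax qs \<longleftrightarrow> qs \<in> {0..1} \<and> (\<forall>q\<in>{0..1}. fB B p q \<le> fB B p qs)"
    by (simp add: SNE_def TH_mono)
  also have "\<dots> \<longleftrightarrow> qs \<in> {0..1} \<and> fB B p qs = p"
  proof -
    have le: "fB B p q \<le> p" if "q \<in> {0..1}" for q
      using fB_le[OF assms(1,2) _ _ assms(3)] that by simp
    have "(\<forall>q\<in>{0..1}. fB B p q \<le> fB B p qs) \<longleftrightarrow> p \<le> fB B p qs"
    proof
      assume "\<forall>q\<in>{0..1}. fB B p q \<le> fB B p qs"
      then have "fB B p 1 \<le> fB B p qs" by simp
      then show "p \<le> fB B p qs" by (simp add: fB_one[OF assms(3)])
    qed (use le order_trans in blast)
    then show ?thesis using le[of qs] by auto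
  qed
  finally show ?thesis .
qed

theorem theorem4:
  fixes lam lmax p :: real and B :: nat
  assumes "lam > 0" and "lmax > 0" and "0 < p" and "p < 1" and "B \<ge> 1"
  shows "SNE B p lam lmax 1 \<and>
    (\<forall>qs. SNE B p lam lmax qs \<longrightarrow>
       TH B p lam lmax qs qs = p * exp (- (p * lam / lmax)) \<and>
       lam * TH B p lam lmax qs qs = lam * p * exp (- (p * lam / lmax)))"
proof -
  note SNE = SNE_iff_fB_eq[OF assms(3-5)]
  have "SNE B p lam lmax 1"
    using SNE fB_one[OF assms(5)] by simp
  moreover have "TH B p lam lmax qs qs = p * exp (- (p * lam / lmax))"
    if "SNE B p lam lmax qs" for qs
    using that SNE by (simp add: TH_def mult.commute)
  ultimately show ?thesis by simp
qed

end
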